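(* Let $\mathfrak L=\mathbb V\oplus\mathbb W$ be a color gLt-algebra admitting a quasi-multiplicative basis $\mathfrak B=\{e_i\}_{i\in I}$ of $\mathbb W\neq 0$, and let $\phi$ be the associated map defined in the context. Let $J\subset I\,\dot\cup\,\overline I$ with $J=\overline J$, let $X\in\mathfrak I^{\,n-1}\,\dot\cup\,\overline{\mathfrak I}^{\,n-1}$ and $i\in I$. The following are equivalent: (1) $i\in\phi(J,X)$; (2) either $\phi(\{i\},\overline X)\cap J\cap I\neq\emptyset$ or $\phi(\{\overline i\},X)\cap J\cap I\neq\emptyset$.
   Context: Let $\mathbb F$ be a field, $\mathbb G$ an abelian group, $n\ge 2$, and $\epsilon:\mathbb G\times\mathbb G\to\mathbb F\setminus\{0\}$ a bicharacter ($\epsilon(k,g+h)=\epsilon(k,g)\epsilon(k,h)$, $\epsilon(g+h,k)=\epsilon(g,k)\epsilon(h,k)$, $\epsilon(g,h)\epsilon(h,g)=1$). A graded $n$-ary algebra is a $\mathbb G$-graded vector space $\mathfrak L=\bigoplus_{g\in\mathbb G}\mathfrak L_g$ with an $n$-linear map $\langle\cdot,\dots,\cdot\rangle:\mathfrak L^n\to\mathfrak L$ such that $\langle\mathfrak L_{g_1},\dots,\mathfrak L_{g_n}\rangle\subset\mathfrak L_{g_1+\dots+g_n}$. For $\sigma\in\mathbb S_n$ write $\langle x_1,\dots,x_n\rangle_\sigma:=\langle x_{\sigma(1)},\dots,x_{\sigma(n)}\rangle$; for subsets $A_1,\dots,A_n$, $\langle A_1,\dots,A_n\rangle_\sigma$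 denotes the linear span of all $\langle x_1,\dots,x_n\rangle_\sigma$ with $x_r\in A_r$. A color gLt-algebra is a graded $n$-ary algebra satisfying, for each $k=1,\dots,n$ and fixed scalars $\alpha^{\sigma_1,\sigma_2}_{i,j,k}\in\mathbb F$, the color version (each term on the right multiplied by the product of values of $\epsilon$ on the degrees of the homogeneous arguments transposed in passing from the left-hand order to the order of that term) of the identity $\langle y_1,\dots,y_{k-1},\langle x_1,\dots,x_n\rangle,y_k,\dots,y_{n-1}\rangle=\sum_{1\le i,j\le n,\,\sigma_1\in\mathbb S_n,\,\sigma_2\in\mathbb S_{n-1}}\alpha^{\sigma_1,\sigma_2}_{i,j,k}\langle x_{\sigma_1(1)},\dots,x_{\sigma_1(i-1)},\langle y_{\sigma_2(1)},\dots,y_{\sigma_2(j-1)},x_{\sigma_1(i)},y_{\sigma_2(j)},\dots,y_{\sigma_2(n-1)}\rangle,x_{\sigma_1(i+1)},\dots,x_{\sigma_1(n)}\rangle$. $\mathfrak L$ admits a quasi-multiplicative basis if $\mathfrak L=\mathbb V\oplus\mathbb W$ with $\mathbb V$, $\mathbb W\ne0$ graded subspaces and $\mathfrak B=\{e_i\}_{i\in I}$ a basis of homogeneous elements of $\mathbb W$ such that: (1) for $i_1,\dots,i_n\in I$, either $\langle e_{i_1},\dots,e_{i_n}\rangle\in\mathbb Fe_j$ for some $j\in I$ or $\langle e_{i_1},\dots,e_{i_n}\rangle\in\mathbb V$; (2) for $0<k<n$, $i_1,\dots,i_k\in I$ and $\sigma\in\mathbb S_n$, $\langle e_{i_1},\dots,e_{i_k},\mathbb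 V,\dots,\mathbb V\rangle_\sigma\subset\mathbb Fe_{j_\sigma}$ for some $j_\sigma\in I$; (3) either $\langle\mathbb V,\dots,\mathbb V\rangle\subset\mathbb Fe_j$ for some $j\in I$ or $\langle\mathbb V,\dots,\mathbb V\rangle\subset\mathbb V$. Index maps: let $v$ be a symbol not in $I$, $\mathfrak I:=I\,\dot\cup\,\{v\}$; for each $j\in\mathfrak I$ take a new symbol $\overline j$, $\overline I:=\{\overline i:i\in I\}$, $\overline{\mathfrak I}:=\overline I\,\dot\cup\,\{\overline v\}$; set $\overline{(\overline j)}:=j$, $\overline J:=\{\overline j:j\in J\}$ for a set $J$ of symbols ($\overline\emptyset=\emptyset$), and $\overline X:=(\overline a_2,\dots,\overline a_n)$ for a tuple $X=(a_2,\dots,a_n)$. Put $u_j:=e_j$ for $j\in I$ and $u_v:=\mathbb V$. For $\sigma\in\mathbb S_n$ and $(j_1,\dots,j_n)\in\mathfrak I^n$ let $a_\sigma(j_1,\dots,j_n)=\{r\}$ if $r\in I$ and $0\ne\langle u_{j_1},\dots,u_{j_n}\rangle_\sigma\subset\mathbb Fe_r$, $=\{v\}$ if $0\ne\langle u_{j_1},\dots,u_{j_n}\rangle_\sigma\subset\mathbb V$, and $=\emptyset$ otherwise. For $j,j_2,\dots,j_n\in\mathfrak I$ let $b_\sigma(j,\overline j_2,\dots,\overline j_n):=\{x\in\mathfrak I: a_\sigma(x,j_2,\dots,j_n)=\{j\}\}$. Define $\mu$ on $(\mathfrak I\,\dot\cup\,\overline{\mathfrak I})\times(\mathfrak I^{n-1}\,\dot\cup\,\overline{\mathfrak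 I}^{n-1})$ with values subsets of $\mathfrak I$ by: $\mu(j,j_1,\dots,j_{n-1})=\bigcup_{\sigma\in\mathbb S_n}a_\sigma(j,j_1,\dots,j_{n-1})$ for $j,j_1,\dots,j_{n-1}\in\mathfrak I$; $\mu(j,\overline j_1,\dots,\overline j_{n-1})=\bigcup_{\sigma\in\mathbb S_n}b_\sigma(j,\overline j_1,\dots,\overline j_{n-1})$ for $j,j_1,\dots,j_{n-1}\in\mathfrak I$; $\mu(\overline j,j_1,\dots,j_{n-1})=\bigcup_{1\le k\le n-1,\ \sigma\in\mathbb S_n}b_\sigma(j_k,\overline j,\overline j_1,\dots,\overline j_{k-1},\overline j_{k+1},\dots,\overline j_{n-1})$ for $j,j_1,\dots,j_{n-1}\in\mathfrak I$; and $\mu(\overline j,\overline j_1,\dots,\overline j_{n-1})=\emptyset$. Define $\phi$ on pairs $(J,X)$ with $J\subset I\,\dot\cup\,\overline I$ and $X\in\mathfrak I^{n-1}\,\dot\cup\,\overline{\mathfrak I}^{n-1}$ by $\phi(\emptyset,X)=\emptyset$ and, for $J\ne\emptyset$, $\phi(J,X):=K\cup\overline K$ where $K:=\big(\bigcup_{j\in J}\mu(j,X)\big)\setminus\{v\}$. *)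

theory Defs
  imports Complex_Main "HOL-Combinatorics.Permutations"
begin

definition bichar :: "('g::ab_group_add \<Rightarrow> 'g \<Rightarrow> 'k::field) \<Rightarrow> bool" where
  "bichar \<epsilon> \<longleftrightarrow> (\<forall>g h. \<epsilon> g h \<noteq> 0)
     \<and> (\<forall>k g h. \<epsilon> k (g + h) = \<epsilon> k g * \<epsilon> k h)
     \<and> (\<forall>g h k. \<epsilon> (g + h) k = \<epsilon> g k * \<epsilon> h k)
     \<and> (\<forall>g h. \<epsilon> g h * \<epsilon> h g = 1)"

definition grading :: "('k::field \<Rightarrow> 'v::ab_group_add \<Rightarrow> 'v) \<Rightarrow> ('g \<Rightarrow> 'v set) \<Rightarrow> bool" where
  "grading scale L \<longleftrightarrow> (\<forall>g. module.subspace scale (L g))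
     \<and> (\<forall>x. \<exists>!c. finite {g. c g \<noteq> 0} \<and> (\<forall>g. c g \<in> L g) \<and> x = sum c {g. c g \<noteq> 0})"

definition graded_subspace :: "('k::field \<Rightarrow> 'v::ab_group_add \<Rightarrow> 'v) \<Rightarrow> ('g \<Rightarrow> 'v set) \<Rightarrow> 'v set \<Rightarrow> bool" where
  "graded_subspace scale L S \<longleftrightarrow> module.subspace scale S
     \<and> (\<forall>x\<in>S. \<forall>c. (finite {g. c g \<noteq> 0} \<and> (\<forall>g. c g \<in> L g) \<and> x = sum c {g. c g \<noteq> 0})
                   \<longrightarrow> (\<forall>g. c g \<in> S))"

text \<open>The n-ary product is a map on lists; only lists of length n matter.
  Arguments are indexed 0..n-1.\<close>
definition graded_nary_algebra ::
  "('k::field \<Rightarrow> 'v::ab_group_add \<Rightarrow> 'v) \<Rightarrow> ('g::ab_group_add \<Rightarrow> 'v set) \<Rightarrow> nat \<Rightarrow> ('v list \<Rightarrow> 'v) \<Rightarrow> bool" where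
  "graded_nary_algebra scale L n m \<longleftrightarrow> vector_space scale \<and> grading scale L
     \<and> (\<forall>x r. r < n \<longrightarrow> Vector_Spaces.linear scale scale (\<lambda>z. m (map (x(r := z)) [0..<n])))
     \<and> (\<forall>x d. (\<forall>r<n. x r \<in> L (d r)) \<longrightarrow> m (map x [0..<n]) \<in> L (\<Sum>r<n. d r))"

text \<open>\<open>\<langle>x_1,...,x_n\<rangle>_\<sigma> = \<langle>x_\<sigma>(1),...,x_\<sigma>(n)\<rangle>\<close> (0-indexed).\<close>
definition nprod :: "('v list \<Rightarrow> 'v) \<Rightarrow> nat \<Rightarrow> (nat \<Rightarrow> 'v) \<Rightarrow> (nat \<Rightarrow> nat) \<Rightarrow> 'v" where
  "nprod m n x \<sigma> = m (map (\<lambda>r. x (\<sigma> r)) [0..<n])"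

text \<open>Atoms: \<open>Inl r\<close> stands for \<open>x_r\<close> (r < n), \<open>Inr s\<close> for \<open>y_s\<close> (s < n-1).
  Order of the atoms on the left hand side, and in the (i,j,sigma1,sigma2)-term on the right.\<close>
definition lhs_order :: "nat \<Rightarrow> nat \<Rightarrow> (nat + nat) list" where
  "lhs_order n k = map Inr [0..<k] @ map Inl [0..<n] @ map Inr [k..<n-1]"

definition rhs_order :: "nat \<Rightarrow> (nat \<Rightarrow> nat) \<Rightarrow> (nat \<Rightarrow> nat) \<Rightarrow> nat \<Rightarrow> nat \<Rightarrow> (nat + nat) list" where
  "rhs_order n \<sigma>1 \<sigma>2 i j = map (Inl \<circ> \<sigma>1) [0..<i] @ map (Inr \<circ> \<sigma>2) [0..<j] @ [Inl (\<sigma>1 i)]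
      @ map (Inr \<circ> \<sigma>2) [j..<n-1] @ map (Inl \<circ> \<sigma>1) [Suc i..<n]"

definition pos :: "'a list \<Rightarrow> 'a \<Rightarrow> nat" where
  "pos xs a = (LEAST p. p < length xs \<and> xs ! p = a)"

definition color_factor :: "('g \<Rightarrow> 'g \<Rightarrow> 'k::field) \<Rightarrow> ('a \<Rightarrow> 'g) \<Rightarrow> 'a list \<Rightarrow> 'a list \<Rightarrow> 'k" where
  "color_factor \<epsilon> deg Lo Ro =
     (\<Prod>(a, b)\<in>{(a, b). a \<in> set Lo \<and> b \<in> set Lo \<and> pos Lo a < pos Lo b \<and> pos Ro b < pos Ro a}.
        \<epsilon> (deg a) (deg b))"

definition color_gLt ::
  "('k::field \<Rightarrow> 'v::ab_group_add \<Rightarrow> 'v) \<Rightarrow> ('g::ab_group_add \<Rightarrow> 'v set) \<Rightarrow> ('g \<Rightarrow> 'g \<Rightarrow> 'k)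
   \<Rightarrow> nat \<Rightarrow> ('v list \<Rightarrow> 'v) \<Rightarrow> ((nat \<Rightarrow> nat) \<Rightarrow> (nat \<Rightarrow> nat) \<Rightarrow> nat \<Rightarrow> nat \<Rightarrow> nat \<Rightarrow> 'k) \<Rightarrow> bool" where
  "color_gLt scale L \<epsilon> n m \<alpha> \<longleftrightarrow> graded_nary_algebra scale L n m \<and>
    (\<forall>k<n. \<forall>x y dx dy. (\<forall>r<n. x r \<in> L (dx r)) \<and> (\<forall>s<n-1. y s \<in> L (dy s)) \<longrightarrow>
       m (map y [0..<k] @ [m (map x [0..<n])] @ map y [k..<n-1]) =
       (\<Sum>i<n. \<Sum>j<n. \<Sum>\<sigma>1\<in>{\<sigma>. \<sigma> permutes {..<n}}. \<Sum>\<sigma>2\<in>{\<sigma>. \<sigma> permutes {..<n-1}}.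
          scale (\<alpha> \<sigma>1 \<sigma>2 i j k * color_factor \<epsilon> (case_sum dx dy) (lhs_order n k) (rhs_order n \<sigma>1 \<sigma>2 i j))
            (let xs = map (x \<circ> \<sigma>1) [0..<n]; ys = map (y \<circ> \<sigma>2) [0..<n-1] in
             m (take i xs @ [m (take j ys @ [xs ! i] @ drop j ys)] @ drop (Suc i) xs))))"

definition line :: "('k \<Rightarrow> 'v \<Rightarrow> 'v) \<Rightarrow> 'v \<Rightarrow> 'v set" where
  "line scale v = {scale c v | c. True}"

definition prodset :: "('k::field \<Rightarrow> 'v::ab_group_add \<Rightarrow> 'v) \<Rightarrow> ('v list \<Rightarrow> 'v) \<Rightarrow> nat
   \<Rightarrow> (nat \<Rightarrow> 'v set) \<Rightarrow> (nat \<Rightarrow> nat) \<Rightarrow> 'v set" where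
  "prodset scale m n A \<sigma> = module.span scale {nprod m n x \<sigma> | x. \<forall>r<n. x r \<in> A r}"

definition qm_basis :: "('k::field \<Rightarrow> 'v::ab_group_add \<Rightarrow> 'v) \<Rightarrow> ('g::ab_group_add \<Rightarrow> 'v set) \<Rightarrow> nat
   \<Rightarrow> ('v list \<Rightarrow> 'v) \<Rightarrow> 'v set \<Rightarrow> 'v set \<Rightarrow> ('i \<Rightarrow> 'v) \<Rightarrow> bool" where
  "qm_basis scale L n m V W e \<longleftrightarrow>
     graded_subspace scale L V \<and> graded_subspace scale L W \<and> V \<noteq> {0} \<and> W \<noteq> {0}
     \<and> (\<forall>z. \<exists>a\<in>V. \<exists>b\<in>W. z = a + b) \<and> V \<inter> W = {0}
     \<and> inj e \<and> \<not> module.dependent scale (range e) \<and> module.span scale (range e) = W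
     \<and> (\<forall>i. \<exists>g. e i \<in> L g)
     \<and> (\<forall>is. (\<exists>j. m (map (e \<circ> is) [0..<n]) \<in> line scale (e j)) \<or> m (map (e \<circ> is) [0..<n]) \<in> V)
     \<and> (\<forall>k is \<sigma>. 0 < k \<and> k < n \<and> \<sigma> permutes {..<n} \<longrightarrow>
          (\<exists>j. prodset scale m n (\<lambda>r. if r < k then {e (is r)} else V) \<sigma> \<subseteq> line scale (e j)))
     \<and> ((\<exists>j. prodset scale m n (\<lambda>_. V) id \<subseteq> line scale (e j)) \<or> prodset scale m n (\<lambda>_. V) id \<subseteq> V)"

text \<open>Symbols of \<open>\<I> = I \<union> {v}\<close> are \<open>'i option\<close> (\<open>None\<close> = v); \<open>Pl\<close>/\<open>Br\<close> mark unbarred/barred symbols.\<close>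
datatype 'i sym = Pl "'i option" | Br "'i option"

fun bar :: "'i sym \<Rightarrow> 'i sym" where
  "bar (Pl j) = Br j" | "bar (Br j) = Pl j"

fun unsym :: "'i sym \<Rightarrow> 'i option" where
  "unsym (Pl j) = j" | "unsym (Br j) = j"

definition usym :: "'v set \<Rightarrow> ('i \<Rightarrow> 'v) \<Rightarrow> 'i option \<Rightarrow> 'v set" where
  "usym V e j = (case j of Some i \<Rightarrow> {e i} | None \<Rightarrow> V)"

definition amap :: "('k::field \<Rightarrow> 'v::ab_group_add \<Rightarrow> 'v) \<Rightarrow> ('v list \<Rightarrow> 'v) \<Rightarrow> nat \<Rightarrow> 'v set
   \<Rightarrow> ('i \<Rightarrow> 'v) \<Rightarrow> (nat \<Rightarrow> nat) \<Rightarrow> 'i option list \<Rightarrow> 'i option set" where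
  "amap scale m n V e \<sigma> js =
     (let P = prodset scale m n (\<lambda>r. usym V e (js ! r)) \<sigma> in
      {Some r | r. P \<noteq> {0} \<and> P \<subseteq> line scale (e r)} \<union> {None | _::unit. P \<noteq> {0} \<and> P \<subseteq> V})"

definition bmap :: "('k::field \<Rightarrow> 'v::ab_group_add \<Rightarrow> 'v) \<Rightarrow> ('v list \<Rightarrow> 'v) \<Rightarrow> nat \<Rightarrow> 'v set
   \<Rightarrow> ('i \<Rightarrow> 'v) \<Rightarrow> (nat \<Rightarrow> nat) \<Rightarrow> 'i option \<Rightarrow> 'i option list \<Rightarrow> 'i option set" where
  "bmap scale m n V e \<sigma> j js = {x. amap scale m n V e \<sigma> (x # js) = {j}}"

definition all_pl :: "'i sym list \<Rightarrow> bool" where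
  "all_pl X \<longleftrightarrow> (\<forall>t\<in>set X. \<exists>j. t = Pl j)"

definition all_br :: "'i sym list \<Rightarrow> bool" where
  "all_br X \<longleftrightarrow> (\<forall>t\<in>set X. \<exists>j. t = Br j)"

text \<open>\<open>\<mu>\<close> (only meaningful for X a tuple of n-1 symbols all unbarred or all barred).\<close>
fun mu :: "('k::field \<Rightarrow> 'v::ab_group_add \<Rightarrow> 'v) \<Rightarrow> ('v list \<Rightarrow> 'v) \<Rightarrow> nat \<Rightarrow> 'v set
   \<Rightarrow> ('i \<Rightarrow> 'v) \<Rightarrow> 'i sym \<Rightarrow> 'i sym list \<Rightarrow> 'i option set" where
  "mu scale m n V e (Pl j) X =
     (if all_pl X then (\<Union>\<sigma>\<in>{\<sigma>. \<sigma> permutes {..<n}}. amap scale m n V e \<sigma> (j # map unsym X))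
      else if all_br X then (\<Union>\<sigma>\<in>{\<sigma>. \<sigma> permutes {..<n}}. bmap scale m n V e \<sigma> j (map unsym X))
      else {})"
| "mu scale m n V e (Br j) X =
     (if all_pl X then
        (\<Union>k<n-1. \<Union>\<sigma>\<in>{\<sigma>. \<sigma> permutes {..<n}}.
            bmap scale m n V e \<sigma> (unsym (X ! k)) (j # map unsym (take k X @ drop (Suc k) X)))
      else {})"

definition phi :: "('k::field \<Rightarrow> 'v::ab_group_add \<Rightarrow> 'v) \<Rightarrow> ('v list \<Rightarrow> 'v) \<Rightarrow> nat \<Rightarrow> 'v set
   \<Rightarrow> ('i \<Rightarrow> 'v) \<Rightarrow> 'i sym set \<Rightarrow> 'i sym list \<Rightarrow> 'i sym set" where
  "phi scale m n V e J X =
     (if J = {} then {}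
      else (let K = {i. Some i \<in> (\<Union>j\<in>J. mu scale m n V e j X)} in
            (Pl \<circ> Some) ` K \<union> (Br \<circ> Some) ` K))"

end

theory Submission
  imports Defs
begin

text \<open>Two facts drive the equivalence. First, each set \<open>a\<^sub>\<sigma>(j\<^sub>1,\<dots>,j\<^sub>n)\<close> has at most one
  element: a nonzero product cannot lie on two different basis lines, nor on a basis line and
  in \<open>V\<close>, because \<open>V \<inter> W = 0\<close>. Hence \<open>x \<in> a\<^sub>\<sigma>(y,Y)\<close> iff \<open>a\<^sub>\<sigma>(y,Y) = {x}\<close> iff
  \<open>y \<in> b\<^sub>\<sigma>(x,Y)\<close>, which makes \<open>\<mu>\<close> on an unbarred first argument dual under barring \<open>X\<close>.
  Second, exchanging the first two arguments of a product only composes \<open>\<sigma>\<close> with a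
  transposition, so \<open>\<mu>\<close> on a barred first argument is symmetric in its first two arguments.
  As \<open>J\<close> is closed under bars, both sides of the equivalence then unfold to the same condition.\<close>

lemma (in vector_space) basis_line_unique:
  assumes "inj e" and "independent (range e)"
    and "c *s e r = d *s e r'" and "c *s e r \<noteq> 0"
  shows "r = r'"
proof (rule ccontr)
  assume "r \<noteq> r'"
  have "c \<noteq> 0" using assms(4) by auto
  then have "e r = inverse c *s (c *s e r)"
    by simp
  also have "\<dots> = (inverse c * d) *s e r'"
    using assms(3) by simp
  also have "\<dots> \<in> span (range e - {e r})"
    using \<open>r \<noteq> r'\<close> \<open>inj e\<close> by (intro span_scale span_base) (auto dest: injD)
  finally have "dependent (range e)"
    unfolding dependent_def by blast
  with assms(2) show False by blast
qed

lemma (in vector_space) amap_subsingleton: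
  assumes "inj e" and "independent (range e)" and "V \<inter> span (range e) = {0}"
    and "x \<in> amap scale m n V e \<sigma> js" and "y \<in> amap scale m n V e \<sigma> js"
  shows "x = y"
proof -
  define P where "P = prodset scale m n (\<lambda>r. usym V e (js ! r)) \<sigma>"
  have amap_eq: "amap scale m n V e \<sigma> js =
      {Some r | r. P \<noteq> {0} \<and> P \<subseteq> line scale (e r)} \<union> {None | _::unit. P \<noteq> {0} \<and> P \<subseteq> V}"
    unfolding amap_def P_def Let_def by simp
  have "0 \<in> P"
    unfolding P_def prodset_def by (rule span_zero)
  moreover have "P \<noteq> {0}"
    using assms(4) unfolding amap_eq by auto
  ultimately obtain p where "p \<in> P" and "p \<noteq> 0" by auto
  have on_line: "\<exists>c. p = c *s e r" if "Some r \<in> amap scale m n V e \<sigma> js" for r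
    using that \<open>p \<in> P\<close> unfolding amap_eq line_def by auto
  have not_in_V: "None \<notin> amap scale m n V e \<sigma> js" if r: "Some r \<in> amap scale m n V e \<sigma> js" for r
  proof
    assume "None \<in> amap scale m n V e \<sigma> js"
    then have "p \<in> V"
      using \<open>p \<in> P\<close> unfolding amap_eq by auto
    moreover obtain c where "p = c *s e r"
      using on_line[OF r] by blast
    then have "p \<in> span (range e)"
      by (simp add: span_base span_scale)
    ultimately show False
      using assms(3) \<open>p \<noteq> 0\<close> by blast
  qed
  show ?thesis
  proof (cases x; cases y)
    fix r r' assume "x = Some r" "y = Some r'"
    with assms(4,5) on_line obtain c d where "p = c *s e r" "p = d *s e r'"
      by metis
    then show ?thesis
      using basis_line_unique[OF assms(1,2)] \<open>p \<noteq> 0\<close> \<open>x = Some r\<close> \<open>y = Some r'\<close> by metis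
  qed (use assms(4,5) not_in_V in auto)
qed

lemma prodset_permute:
  assumes "\<tau> permutes {..<n}"
  shows "prodset scale m n (A \<circ> \<tau>) \<sigma> = prodset scale m n A (\<tau> \<circ> \<sigma>)"
proof -
  have inv_closed: "inv \<tau> r < n" if "r < n" for r
    using assms that by (metis lessThan_iff permutes_inv permutes_in_image)
  have "{nprod m n x \<sigma> | x. \<forall>r<n. x r \<in> A (\<tau> r)} = {nprod m n y (\<tau> \<circ> \<sigma>) | y. \<forall>r<n. y r \<in> A r}"
  proof (intro set_eqI iffI)
    fix z assume "z \<in> {nprod m n x \<sigma> | x. \<forall>r<n. x r \<in> A (\<tau> r)}"
    then obtain x where z: "z = nprod m n x \<sigma>" and x: "\<forall>r<n. x r \<in> A (\<tau> r)" by auto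
    have "z = nprod m n (x \<circ> inv \<tau>) (\<tau> \<circ> \<sigma>)"
      unfolding z nprod_def using permutes_inverses(2)[OF assms] by simp
    moreover have "\<forall>r<n. (x \<circ> inv \<tau>) r \<in> A r"
      using x inv_closed permutes_inverses(1)[OF assms] by fastforce
    ultimately show "z \<in> {nprod m n y (\<tau> \<circ> \<sigma>) | y. \<forall>r<n. y r \<in> A r}" by blast
  next
    fix z assume "z \<in> {nprod m n y (\<tau> \<circ> \<sigma>) | y. \<forall>r<n. y r \<in> A r}"
    then obtain y where z: "z = nprod m n y (\<tau> \<circ> \<sigma>)" and y: "\<forall>r<n. y r \<in> A r" by auto
    have "z = nprod m n (y \<circ> \<tau>) \<sigma>"
      unfolding z nprod_def by simp
    moreover have "\<forall>r<n. (y \<circ> \<tau>) r \<in> A (\<tau> r)"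
      using y assms by (metis comp_apply lessThan_iff permutes_in_image)
    ultimately show "z \<in> {nprod m n x \<sigma> | x. \<forall>r<n. x r \<in> A (\<tau> r)}" by blast
  qed
  then show ?thesis
    unfolding prodset_def by simp
qed

lemma amap_swap:
  assumes "2 \<le> n"
  shows "amap scale m n V e \<sigma> (b # a # js) =
         amap scale m n V e (Transposition.transpose 0 1 \<circ> \<sigma>) (a # b # js)"
proof -
  let ?\<tau> = "Transposition.transpose (0::nat) 1"
  have "(\<lambda>r. usym V e ((b # a # js) ! r)) = (\<lambda>r. usym V e ((a # b # js) ! r)) \<circ> ?\<tau>"
  proof
    fix r show "usym V e ((b # a # js) ! r) = ((\<lambda>r. usym V e ((a # b # js) ! r)) \<circ> ?\<tau>) r"
      by (cases r; cases "r - 1") (auto simp: Transposition.transpose_def)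
  qed
  moreover have "?\<tau> permutes {..<n}"
    using assms by (intro permutes_swap_id) auto
  ultimately show ?thesis
    unfolding amap_def by (simp add: prodset_permute)
qed

lemma ex_amap_swap:
  assumes "2 \<le> n"
  shows "(\<exists>\<sigma>. \<sigma> permutes {..<n} \<and> amap scale m n V e \<sigma> (a # b # js) = S) \<longleftrightarrow>
         (\<exists>\<sigma>. \<sigma> permutes {..<n} \<and> amap scale m n V e \<sigma> (b # a # js) = S)"
proof -
  have "Transposition.transpose 0 1 permutes {..<n}"
    using assms by (intro permutes_swap_id) auto
  then show ?thesis
    using amap_swap[OF assms, of scale m V e _ a b js] amap_swap[OF assms, of scale m V e _ b a js]
      permutes_compose by blast
qed

lemma all_pl_map_bar: "all_pl (map bar X) \<longleftrightarrow> all_br X"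
  unfolding all_pl_def all_br_def by (auto elim: bar.elims)

lemma all_br_map_bar: "all_br (map bar X) \<longleftrightarrow> all_pl X"
  unfolding all_pl_def all_br_def by (auto elim: bar.elims)

lemma unsym_comp_bar: "unsym \<circ> bar = unsym"
proof
  fix s :: "'i sym" show "(unsym \<circ> bar) s = unsym s" by (cases s) auto
qed

lemma not_all_pl_and_all_br: "X \<noteq> [] \<Longrightarrow> \<not> (all_pl X \<and> all_br X)"
  unfolding all_pl_def all_br_def by (cases X) auto

lemma (in vector_space) mu_Pl_bar_dual:
  assumes "inj e" and "independent (range e)" and "V \<inter> span (range e) = {0}"
    and "X \<noteq> []" and "all_pl X \<or> all_br X"
  shows "x \<in> mu scale m n V e (Pl y) X \<longleftrightarrow> y \<in> mu scale m n V e (Pl x) (map bar X)"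
proof -
  have singleton: "z \<in> amap scale m n V e \<sigma> js \<longleftrightarrow> amap scale m n V e \<sigma> js = {z}" for z \<sigma> js
    using amap_subsingleton[OF assms(1-3)] by blast
  show ?thesis
    using assms(4,5) not_all_pl_and_all_br[of X] not_all_pl_and_all_br[of "map bar X"]
    by (auto simp: all_pl_map_bar all_br_map_bar unsym_comp_bar bmap_def singleton)
qed

lemma mu_Br_swap:
  assumes "2 \<le> n"
  shows "x \<in> mu scale m n V e (Br y) X \<longleftrightarrow> y \<in> mu scale m n V e (Br x) X"
  using ex_amap_swap[OF assms, of scale m V e x y] by (auto simp: bmap_def)

lemma Pl_Some_in_phi_iff:
  "Pl (Some i) \<in> phi scale m n V e J X \<longleftrightarrow> (\<exists>j\<in>J. Some i \<in> mu scale m n V e j X)"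
  unfolding phi_def Let_def by auto

lemma phi_singleton_meets_Pl_iff:
  "phi scale m n V e {j} X \<inter> J \<inter> range (Pl \<circ> Some) \<noteq> {} \<longleftrightarrow>
   (\<exists>k. Some k \<in> mu scale m n V e j X \<and> Pl (Some k) \<in> J)"
  unfolding phi_def Let_def by auto

lemma bex_bar_closed_iff:
  assumes "J \<subseteq> range (Pl \<circ> Some) \<union> range (Br \<circ> Some)" and "bar ` J = J"
  shows "(\<exists>j\<in>J. P j) \<longleftrightarrow> (\<exists>k. Pl (Some k) \<in> J \<and> (P (Pl (Some k)) \<or> P (Br (Some k))))"
proof -
  have bar_in: "bar j \<in> J" if "j \<in> J" for j
    using assms(2) that by blast
  have Pl_iff_Br: "Pl (Some k) \<in> J \<longleftrightarrow> Br (Some k) \<in> J" for k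
    using bar_in[of "Pl (Some k)"] bar_in[of "Br (Some k)"] by auto
  show ?thesis
  proof
    assume "\<exists>j\<in>J. P j"
    then obtain j where "j \<in> J" and "P j" by blast
    moreover obtain k where "j = Pl (Some k) \<or> j = Br (Some k)"
      using assms(1) \<open>j \<in> J\<close> by auto
    ultimately show "\<exists>k. Pl (Some k) \<in> J \<and> (P (Pl (Some k)) \<or> P (Br (Some k)))"
      using Pl_iff_Br by blast
  next
    assume "\<exists>k. Pl (Some k) \<in> J \<and> (P (Pl (Some k)) \<or> P (Br (Some k)))"
    then show "\<exists>j\<in>J. P j"
      using Pl_iff_Br by blast
  qed
qed

theorem lemma3p3:
  fixes scale :: "'k::field \<Rightarrow> 'v::ab_group_add \<Rightarrow> 'v"
    and L :: "'g::ab_group_add \<Rightarrow> 'v set"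
    and \<epsilon> :: "'g \<Rightarrow> 'g \<Rightarrow> 'k"
    and n :: nat
    and m :: "'v list \<Rightarrow> 'v"
    and \<alpha> :: "(nat \<Rightarrow> nat) \<Rightarrow> (nat \<Rightarrow> nat) \<Rightarrow> nat \<Rightarrow> nat \<Rightarrow> nat \<Rightarrow> 'k"
    and V W :: "'v set"
    and e :: "'i \<Rightarrow> 'v"
    and J :: "'i sym set"
    and X :: "'i sym list"
    and i :: 'i
  assumes "2 \<le> n"
    and "bichar \<epsilon>"
    and "color_gLt scale L \<epsilon> n m \<alpha>"
    and "qm_basis scale L n m V W e"
    and "J \<subseteq> range (Pl \<circ> Some) \<union> range (Br \<circ> Some)"
    and "bar ` J = J"
    and "length X = n - 1"
    and "all_pl X \<or> all_br X"
  shows "Pl (Some i) \<in> phi scale m n V e J X \<longleftrightarrow>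
           (phi scale m n V e {Pl (Some i)} (map bar X) \<inter> J \<inter> range (Pl \<circ> Some) \<noteq> {}
            \<or> phi scale m n V e {Br (Some i)} X \<inter> J \<inter> range (Pl \<circ> Some) \<noteq> {})"
proof -
  interpret vector_space scale
    using assms(3) unfolding color_gLt_def graded_nary_algebra_def by auto
  have "inj e" and "independent (range e)" and "span (range e) = W" and "V \<inter> W = {0}"
    using assms(4) unfolding qm_basis_def by blast+
  moreover have "X \<noteq> []"
    using assms(1,7) by auto
  ultimately have dual: "Some i \<in> mu scale m n V e (Pl (Some k)) X \<longleftrightarrow>
      Some k \<in> mu scale m n V e (Pl (Some i)) (map bar X)" for k
    using mu_Pl_bar_dual[of e V X] assms(8) by simp
  have "Pl (Some i) \<in> phi scale m n V e J X \<longleftrightarrow> (\<exists>k. Pl (Some k) \<in> J \<and>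
      (Some i \<in> mu scale m n V e (Pl (Some k)) X \<or> Some i \<in> mu scale m n V e (Br (Some k)) X))"
    unfolding Pl_Some_in_phi_iff by (rule bex_bar_closed_iff[OF assms(5,6)])
  also have "\<dots> \<longleftrightarrow> (\<exists>k. Pl (Some k) \<in> J \<and>
      (Some k \<in> mu scale m n V e (Pl (Some i)) (map bar X) \<or> Some k \<in> mu scale m n V e (Br (Some i)) X))"
    by (simp only: dual mu_Br_swap[OF assms(1), of "Some i"])
  finally show ?thesis
    unfolding phi_singleton_meets_Pl_iff by blast
qed

end
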